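(* For every $\lambda\in\mathbb{C}$, $$\det\left(\mathbf{P}_2^{-1}\mathbf{K}-\lambda I_{2m+n}\right)=(1-\lambda)^{2m}\det\left(B^{-1}H-\lambda I_n\right).$$ Consequently $\mathbf{P}_2^{-1}\mathbf{K}$ has the same eigenvalues (with algebraic multiplicities) as $\mathbf{P}_4^{-1}\mathbf{K}$: the value $1$ with multiplicity (at least) $2m$ together with the eigenvalues of $B^{-1}H$.
   Context: Let $m,n\ge 1$. Let $R_u\in\mathbb{R}^{m\times m}$ be invertible, $R_z\in\mathbb{R}^{m\times n}$, $L_{uu}\in\mathbb{R}^{m\times m}$ symmetric, $L_{uz}\in\mathbb{R}^{m\times n}$, $L_{zu}:=L_{uz}^T$, $L_{zz}\in\mathbb{R}^{n\times n}$ symmetric, and $B\in\mathbb{R}^{n\times n}$ invertible. Write $R_u^{-T}:=(R_u^{-1})^T$. Define the reduced Hessian $H:=L_{zz}-L_{zu}R_u^{-1}R_z-R_z^TR_u^{-T}L_{uz}+R_z^TR_u^{-T}L_{uu}R_u^{-1}R_z$. The KKT matrix is $\mathbf{K}:=\begin{bmatrix} L_{uu} & L_{uz} & R_u^T\\ L_{zu} & L_{zz} & R_z^T\\ R_u & R_z & 0\end{bmatrix}$ and $\mathbf{P}_2:=\begin{bmatrix} 0 & 0 & R_u^T\\ 0 & B & R_z^T\\ R_u & R_z & 0\end{bmatrix}$. $\mathbf{P}_4:=\mathbf{K}_1\mathbf{K}_2$ with $\mathbf{K}_1=\begin{bmatrix} L_{uu}R_u^{-1} & 0 & I_m\\ L_{zu}R_u^{-1}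 & I_n & R_z^TR_u^{-T}\\ I_m & 0 & 0\end{bmatrix}$, $\mathbf{K}_2=\begin{bmatrix} R_u & R_z & 0\\ 0 & B & 0\\ 0 & L_{uz}-L_{uu}R_u^{-1}R_z & R_u^T\end{bmatrix}$. *)

theory Defs
  imports "Jordan_Normal_Form.Determinant" "Jordan_Normal_Form.Char_Poly"
begin

text \<open>Two-sided inverse of a square matrix (arbitrary if none exists).\<close>
definition minv :: "'a :: comm_ring_1 mat \<Rightarrow> 'a mat" where
  "minv A = (SOME C. C \<in> carrier_mat (dim_row A) (dim_row A) \<and>
               A * C = 1\<^sub>m (dim_row A) \<and> C * A = 1\<^sub>m (dim_row A))"

text \<open>3 x 3 block matrix [[A11 A12 A13];[A21 A22 A23];[A31 A32 A33]].\<close>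
definition block3 :: "'a :: zero mat \<Rightarrow> 'a mat \<Rightarrow> 'a mat \<Rightarrow> 'a mat \<Rightarrow> 'a mat \<Rightarrow> 'a mat
    \<Rightarrow> 'a mat \<Rightarrow> 'a mat \<Rightarrow> 'a mat \<Rightarrow> 'a mat" where
  "block3 A11 A12 A13 A21 A22 A23 A31 A32 A33 =
     four_block_mat (four_block_mat A11 A12 A21 A22)
       (four_block_mat A13 (0\<^sub>m (dim_row A13) 0) A23 (0\<^sub>m (dim_row A23) 0))
       (four_block_mat A31 A32 (0\<^sub>m 0 (dim_col A31)) (0\<^sub>m 0 (dim_col A32)))
       A33"

abbreviation cmat :: "real mat \<Rightarrow> complex mat" where
  "cmat A \<equiv> map_mat complex_of_real A"

end

theory Submission
  imports Defs
begin

(* Write W = Ru^-1 Rz and X = Luz - Luu W, so that H = Lzz - Lzu W - W^T X.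
   Multiplying on the right by the unipotent S = [I -W 0; 0 I 0; 0 0 I] clears the (3,2) block
   of K and of P2, and then K S = (P2 S) T with T block lower triangular with diagonal blocks
   I, B^-1 H, I; so P2^-1 K = S T S^-1 is similar to T.  For P4 = K1 K2 one checks directly
   that K = P4 T' where T' has the same diagonal blocks and is block triangular after
   reordering.  Hence both characteristic polynomials equal (x - 1)^(2m) chi(B^-1 H), and
   det (A - lam I) = (-1)^N chi_A(lam) turns this into the determinant identity. *)

lemma minv_right_inverse:
  fixes A :: "'a::field mat"
  assumes A: "A \<in> carrier_mat n n" and C: "C \<in> carrier_mat n n" and AC: "A * C = 1\<^sub>m n"
  shows "minv A \<in> carrier_mat n n" "A * minv A = 1\<^sub>m n" "minv A * A = 1\<^sub>m n"
proof -
  have "C * A = 1\<^sub>m n" by (rule mat_mult_left_right_inverse[OF A C AC])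
  with A C AC have "\<exists>C. C \<in> carrier_mat (dim_row A) (dim_row A) \<and> A * C = 1\<^sub>m (dim_row A)
      \<and> C * A = 1\<^sub>m (dim_row A)"
    by auto
  from someI_ex[OF this] A show "minv A \<in> carrier_mat n n" "A * minv A = 1\<^sub>m n" "minv A * A = 1\<^sub>m n"
    unfolding minv_def by auto
qed

lemma minv_invertible:
  fixes A :: "'a::field mat"
  assumes A: "A \<in> carrier_mat n n" and inv: "invertible_mat A"
  shows "minv A \<in> carrier_mat n n" "A * minv A = 1\<^sub>m n" "minv A * A = 1\<^sub>m n"
proof -
  from inv obtain C where AC: "A * C = 1\<^sub>m n" and CA: "C * A = 1\<^sub>m (dim_row C)"
    using A unfolding invertible_mat_def inverts_mat_def by auto
  have "dim_col C = n" "dim_row C = n"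
    using arg_cong[OF AC, of dim_col] arg_cong[OF CA, of dim_col] A by auto
  then have "C \<in> carrier_mat n n" by auto
  from minv_right_inverse[OF A this AC] show "minv A \<in> carrier_mat n n" "A * minv A = 1\<^sub>m n" "minv A * A = 1\<^sub>m n" .
qed

lemma minv_mult_cancel_left:
  fixes A :: "'a::field mat"
  assumes A: "A \<in> carrier_mat n n" and C: "C \<in> carrier_mat n n" and AC: "A * C = 1\<^sub>m n"
    and X: "X \<in> carrier_mat n k"
  shows "minv A * (A * X) = X"
  using minv_right_inverse[OF A C AC] A X by (simp flip: assoc_mult_mat)

lemma mult_assoc_dim:
  fixes A :: "'a::semiring_0 mat"
  assumes "dim_col A = dim_row B" "dim_col B = dim_row C"
  shows "A * B * C = A * (B * C)"
  by (rule assoc_mult_mat[of A "dim_row A" "dim_col A" B "dim_col B" C "dim_col C"]) (use assms in auto)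

lemma mult_inverse_cancel_dim:
  fixes A :: "'a::semiring_1 mat"
  assumes "A * B = 1\<^sub>m n" "A \<in> carrier_mat n n" "B \<in> carrier_mat n n" "dim_row X = n"
  shows "A * (B * X) = X"
proof -
  have X: "X \<in> carrier_mat n (dim_col X)" using assms(4) by auto
  have "A * (B * X) = (A * B) * X" using assms(2,3) X by simp
  then show ?thesis using assms(1) X by simp
qed

lemma similar_mat_minv_mult:
  fixes P :: "'a::field mat"
  assumes carrier: "P \<in> carrier_mat n n" "Q \<in> carrier_mat n n" "K \<in> carrier_mat n n"
      "S \<in> carrier_mat n n" "S' \<in> carrier_mat n n" "T \<in> carrier_mat n n"
    and PQ: "P * Q = 1\<^sub>m n" and SS': "S * S' = 1\<^sub>m n" and KS: "K * S = P * S * T"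
  shows "similar_mat (minv P * K) T"
proof -
  note P = minv_right_inverse[OF carrier(1,2) PQ]
  note dims = carrier_matD[OF carrier(1)] carrier_matD[OF carrier(2)] carrier_matD[OF carrier(3)]
    carrier_matD[OF carrier(4)] carrier_matD[OF carrier(5)] carrier_matD[OF carrier(6)]
    carrier_matD[OF P(1)]
  have "minv P * K = minv P * K * (S * S')"
    using SS' carrier P by simp
  also have "\<dots> = minv P * (K * S) * S'"
    by (simp add: mult_assoc_dim dims)
  also have "\<dots> = (minv P * P) * (S * T * S')"
    unfolding KS by (simp add: mult_assoc_dim dims)
  also have "\<dots> = S * T * S'"
    using P carrier by simp
  finally have "minv P * K = S * T * S'" .
  moreover have "S' * S = 1\<^sub>m n"
    by (rule mat_mult_left_right_inverse[OF carrier(4,5) SS'])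
  ultimately show ?thesis
    using carrier P SS' by (intro similar_matI[of _ _ S S' n]) auto
qed

lemma block3_carrier_mat[simp]:
  assumes "A11 \<in> carrier_mat r1 c1" "A22 \<in> carrier_mat r2 c2" "A33 \<in> carrier_mat r3 c3"
  shows "block3 A11 A12 A13 A21 A22 A23 A31 A32 A33 \<in> carrier_mat (r1+r2+r3) (c1+c2+c3)"
  using assms unfolding block3_def by (intro four_block_carrier_mat) auto

lemma block3_cong:
  "A11 = B11 \<Longrightarrow> A12 = B12 \<Longrightarrow> A13 = B13 \<Longrightarrow> A21 = B21 \<Longrightarrow> A22 = B22 \<Longrightarrow> A23 = B23
    \<Longrightarrow> A31 = B31 \<Longrightarrow> A32 = B32 \<Longrightarrow> A33 = B33
    \<Longrightarrow> block3 A11 A12 A13 A21 A22 A23 A31 A32 A33 = block3 B11 B12 B13 B21 B22 B23 B31 B32 B33"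
  by simp

lemma block3_one_mat:
  "block3 (1\<^sub>m a) (0\<^sub>m a b) (0\<^sub>m a c) (0\<^sub>m b a) (1\<^sub>m b) (0\<^sub>m b c) (0\<^sub>m c a) (0\<^sub>m c b) (1\<^sub>m c)
    = 1\<^sub>m (a+b+c)"
  by (rule eq_matI) (auto simp: block3_def)

lemma four_block_mat_empty:
  "X \<in> carrier_mat r c \<Longrightarrow> Y \<in> carrier_mat r 0 \<Longrightarrow> Z \<in> carrier_mat 0 c \<Longrightarrow> U \<in> carrier_mat 0 0
    \<Longrightarrow> four_block_mat X Y Z U = X"
  by (rule eq_matI) auto

lemma mult_block3:
  fixes A11 :: "'a::comm_ring_1 mat"
  assumes a: "A11 \<in> carrier_mat r1 k1" "A12 \<in> carrier_mat r1 k2" "A13 \<in> carrier_mat r1 k3"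
    "A21 \<in> carrier_mat r2 k1" "A22 \<in> carrier_mat r2 k2" "A23 \<in> carrier_mat r2 k3"
    "A31 \<in> carrier_mat r3 k1" "A32 \<in> carrier_mat r3 k2" "A33 \<in> carrier_mat r3 k3"
  and b: "B11 \<in> carrier_mat k1 c1" "B12 \<in> carrier_mat k1 c2" "B13 \<in> carrier_mat k1 c3"
    "B21 \<in> carrier_mat k2 c1" "B22 \<in> carrier_mat k2 c2" "B23 \<in> carrier_mat k2 c3"
    "B31 \<in> carrier_mat k3 c1" "B32 \<in> carrier_mat k3 c2" "B33 \<in> carrier_mat k3 c3"
  shows "block3 A11 A12 A13 A21 A22 A23 A31 A32 A33 * block3 B11 B12 B13 B21 B22 B23 B31 B32 B33
   = block3 (A11*B11 + A12*B21 + A13*B31) (A11*B12 + A12*B22 + A13*B32) (A11*B13 + A12*B23 + A13*B33)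
            (A21*B11 + A22*B21 + A23*B31) (A21*B12 + A22*B22 + A23*B32) (A21*B13 + A22*B23 + A23*B33)
            (A31*B11 + A32*B21 + A33*B31) (A31*B12 + A32*B22 + A33*B32) (A31*B13 + A32*B23 + A33*B33)"
proof -
  let ?X11 = "four_block_mat A11 A12 A21 A22"
  let ?X12 = "four_block_mat A13 (0\<^sub>m r1 0) A23 (0\<^sub>m r2 0)"
  let ?X21 = "four_block_mat A31 A32 (0\<^sub>m 0 k1) (0\<^sub>m 0 k2)"
  let ?Y11 = "four_block_mat B11 B12 B21 B22"
  let ?Y12 = "four_block_mat B13 (0\<^sub>m k1 0) B23 (0\<^sub>m k2 0)"
  let ?Y21 = "four_block_mat B31 B32 (0\<^sub>m 0 c1) (0\<^sub>m 0 c2)"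
  have c: "?X11 \<in> carrier_mat (r1+r2) (k1+k2)" "?X12 \<in> carrier_mat (r1+r2) k3"
    "?X21 \<in> carrier_mat r3 (k1+k2)" "?Y11 \<in> carrier_mat (k1+k2) (c1+c2)"
    "?Y12 \<in> carrier_mat (k1+k2) c3" "?Y21 \<in> carrier_mat k3 (c1+c2)"
    using a b by (auto intro!: four_block_carrier_mat[of _ _ _ _ _ 0 _, simplified])
  have A: "block3 A11 A12 A13 A21 A22 A23 A31 A32 A33 = four_block_mat ?X11 ?X12 ?X21 A33"
    and B: "block3 B11 B12 B13 B21 B22 B23 B31 B32 B33 = four_block_mat ?Y11 ?Y12 ?Y21 B33"
    using a b unfolding block3_def by auto
  have AB: "four_block_mat ?X11 ?X12 ?X21 A33 * four_block_mat ?Y11 ?Y12 ?Y21 B33 =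
     four_block_mat (?X11 * ?Y11 + ?X12 * ?Y21) (?X11 * ?Y12 + ?X12 * B33)
      (?X21 * ?Y11 + A33 * ?Y21) (?X21 * ?Y12 + A33 * B33)"
    by (rule mult_four_block_mat) (use c a b in auto)
  have p1: "?X11 * ?Y11 = four_block_mat (A11*B11 + A12*B21) (A11*B12 + A12*B22)
      (A21*B11 + A22*B21) (A21*B12 + A22*B22)"
    by (rule mult_four_block_mat) (use a b in auto)
  have p2: "?X12 * ?Y21 = four_block_mat (A13*B31) (A13*B32) (A23*B31) (A23*B32)"
    by (subst mult_four_block_mat[of _ r1 k3 _ 0 _ r2 _ _ c1 _ c2]) (use a b in auto)
  have p3: "?X11 * ?Y12 = four_block_mat (A11*B13 + A12*B23) (0\<^sub>m r1 0) (A21*B13 + A22*B23) (0\<^sub>m r2 0)"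
    by (subst mult_four_block_mat[of _ r1 k1 _ k2 _ r2 _ _ c3 _ 0]) (use a b in auto)
  have p4: "?X12 * B33 = four_block_mat (A13*B33) (0\<^sub>m r1 0) (A23*B33) (0\<^sub>m r2 0)"
    by (rule eq_matI) (use a b in \<open>auto simp: scalar_prod_def\<close>)
  have p5: "?X21 * ?Y11 = four_block_mat (A31*B11 + A32*B21) (A31*B12 + A32*B22) (0\<^sub>m 0 c1) (0\<^sub>m 0 c2)"
    by (subst mult_four_block_mat[of _ r3 k1 _ k2 _ 0 _ _ c1 _ c2]) (use a b in auto)
  have p6: "A33 * ?Y21 = four_block_mat (A33*B31) (A33*B32) (0\<^sub>m 0 c1) (0\<^sub>m 0 c2)"
    by (rule eq_matI) (use a b in \<open>auto simp: scalar_prod_def\<close>)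
  have p7: "?X21 * ?Y12 = A31*B13 + A32*B23"
    by (subst mult_four_block_mat[of _ r3 k1 _ k2 _ 0 _ _ c3 _ 0])
      (use a b in \<open>auto intro!: four_block_mat_empty\<close>)
  have s1: "?X11 * ?Y11 + ?X12 * ?Y21 = four_block_mat (A11*B11 + A12*B21 + A13*B31)
      (A11*B12 + A12*B22 + A13*B32) (A21*B11 + A22*B21 + A23*B31) (A21*B12 + A22*B22 + A23*B32)"
    unfolding p1 p2 by (subst add_four_block_mat[of _ r1 c1 _ c2 _ r2]) (use a b in auto)
  have s2: "?X11 * ?Y12 + ?X12 * B33 = four_block_mat (A11*B13 + A12*B23 + A13*B33) (0\<^sub>m r1 0)
      (A21*B13 + A22*B23 + A23*B33) (0\<^sub>m r2 0)"
    unfolding p3 p4 by (subst add_four_block_mat[of _ r1 c3 _ 0 _ r2]) (use a b in auto)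
  have s3: "?X21 * ?Y11 + A33 * ?Y21 = four_block_mat (A31*B11 + A32*B21 + A33*B31)
      (A31*B12 + A32*B22 + A33*B32) (0\<^sub>m 0 c1) (0\<^sub>m 0 c2)"
    unfolding p5 p6 by (subst add_four_block_mat[of _ r3 c1 _ c2 _ 0]) (use a b in auto)
  show ?thesis unfolding A B AB s1 s2 s3 p7 unfolding block3_def
    using a b by (auto intro!: cong_four_block_mat)
qed

lemma char_poly_one_mat: "char_poly (1\<^sub>m n :: 'a::comm_ring_1 mat) = [:-1, 1:] ^ n"
proof -
  have "char_poly (1\<^sub>m n :: 'a mat) = (\<Prod>a \<leftarrow> diag_mat (1\<^sub>m n :: 'a mat). [:- a, 1:])"
    by (rule char_poly_upper_triangular[of _ n]) (auto simp: upper_triangular_def)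
  also have "diag_mat (1\<^sub>m n :: 'a mat) = replicate n 1"
    by (auto simp: diag_mat_def list_eq_iff_nth_eq)
  finally show ?thesis by simp
qed

lemma char_poly_four_block_mat_upper_right_zero:
  fixes A :: "'a::idom mat"
  assumes A: "A \<in> carrier_mat n n" and C: "C \<in> carrier_mat k n" and D: "D \<in> carrier_mat k k"
  shows "char_poly (four_block_mat A (0\<^sub>m n k) C D) = char_poly A * char_poly D"
proof -
  have "char_poly_matrix (four_block_mat A (0\<^sub>m n k) C D) = four_block_mat (char_poly_matrix A)
      (0\<^sub>m n k) (map_mat (\<lambda>a. [: - a :]) C) (char_poly_matrix D)"
    by (rule eq_matI) (use A C D in \<open>auto simp: char_poly_matrix_def\<close>)
  then show ?thesis unfolding char_poly_def
    by (simp add: det_four_block_mat_upper_right_zero[of _ n _ k] A C D)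
qed

lemma char_poly_four_block_mat_lower_left_zero:
  fixes A :: "'a::idom mat"
  assumes A: "A \<in> carrier_mat n n" and B: "B \<in> carrier_mat n k" and D: "D \<in> carrier_mat k k"
  shows "char_poly (four_block_mat A B (0\<^sub>m k n) D) = char_poly A * char_poly D"
proof -
  have "char_poly_matrix (four_block_mat A B (0\<^sub>m k n) D) = four_block_mat (char_poly_matrix A)
      (map_mat (\<lambda>a. [: - a :]) B) (0\<^sub>m k n) (char_poly_matrix D)"
    by (rule eq_matI) (use A B D in \<open>auto simp: char_poly_matrix_def\<close>)
  then show ?thesis unfolding char_poly_def
    by (simp add: det_four_block_mat_lower_left_zero[of _ n _ k] A B D)
qed

lemma char_poly_block3_upper_right_zero:
  fixes A11 :: "'a::idom mat"
  assumes A11: "A11 \<in> carrier_mat n1 n1" and A12: "A12 \<in> carrier_mat n1 n2"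
    and A21: "A21 \<in> carrier_mat n2 n1" and A22: "A22 \<in> carrier_mat n2 n2"
    and A31: "A31 \<in> carrier_mat n3 n1" and A32: "A32 \<in> carrier_mat n3 n2"
    and A33: "A33 \<in> carrier_mat n3 n3"
  shows "char_poly (block3 A11 A12 (0\<^sub>m n1 n3) A21 A22 (0\<^sub>m n2 n3) A31 A32 A33)
    = char_poly (four_block_mat A11 A12 A21 A22) * char_poly A33"
proof -
  have split: "block3 A11 A12 (0\<^sub>m n1 n3) A21 A22 (0\<^sub>m n2 n3) A31 A32 A33 =
    four_block_mat (four_block_mat A11 A12 A21 A22) (0\<^sub>m (n1+n2) n3)
      (four_block_mat A31 A32 (0\<^sub>m 0 n1) (0\<^sub>m 0 n2)) A33"
    unfolding block3_def using four_block_zero_mat[of n1 n3 n2 0] A31 A32 by simp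
  have "four_block_mat A31 A32 (0\<^sub>m 0 n1) (0\<^sub>m 0 n2) \<in> carrier_mat n3 (n1+n2)"
    using four_block_carrier_mat[OF A31, of "0\<^sub>m 0 n2" 0 n2] by simp
  then show ?thesis unfolding split
    by (simp add: char_poly_four_block_mat_upper_right_zero[of _ "n1+n2"] A11 A12 A21 A22 A33)
qed

lemma det_minus_scalar_one:
  fixes A :: "'a::field mat"
  assumes A: "A \<in> carrier_mat n n"
  shows "det (A - k \<cdot>\<^sub>m 1\<^sub>m n) = (-1) ^ n * poly (char_poly A) k"
proof -
  have "- char_matrix A k = (-1) \<cdot>\<^sub>m (A - k \<cdot>\<^sub>m 1\<^sub>m n)"
    by (rule eq_matI) (use A in \<open>auto simp: char_matrix_def\<close>)
  then have "poly (char_poly A) k = (-1) ^ n * det (A - k \<cdot>\<^sub>m 1\<^sub>m n)"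
    unfolding char_poly_matrix[OF A] det_smult using A by simp
  then show ?thesis by (simp flip: power_add add: power_even_eq[symmetric] mult_2[symmetric])
qed

lemma det_minus_scalar_one_factor:
  fixes A :: "'a::field mat"
  assumes A: "A \<in> carrier_mat (k + n) (k + n)" and G: "G \<in> carrier_mat n n"
    and char_poly: "char_poly A = [:-1, 1:] ^ k * char_poly G"
  shows "det (A - x \<cdot>\<^sub>m 1\<^sub>m (k + n)) = (1 - x) ^ k * det (G - x \<cdot>\<^sub>m 1\<^sub>m n)"
proof -
  have "(-1) ^ k * (x - 1) ^ k = (1 - x) ^ k"
    by (simp flip: power_mult_distrib)
  then show ?thesis
    unfolding det_minus_scalar_one[OF A] det_minus_scalar_one[OF G] char_poly
    by (simp add: poly_power power_add algebra_simps)
qed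

locale kkt_system =
  fixes m n :: nat and Ru Rz Luu Luz Lzz B :: "'a::field mat"
  assumes Ru: "Ru \<in> carrier_mat m m" "invertible_mat Ru"
    and Rz: "Rz \<in> carrier_mat m n"
    and Luu: "Luu \<in> carrier_mat m m"
    and Luz: "Luz \<in> carrier_mat m n"
    and Lzz: "Lzz \<in> carrier_mat n n"
    and B: "B \<in> carrier_mat n n" "invertible_mat B"
begin

definition Lzu :: "'a mat" where "Lzu = transpose_mat Luz"
definition RuiT :: "'a mat" where "RuiT = transpose_mat (minv Ru)"

definition H :: "'a mat" where
  "H = Lzz - Lzu * minv Ru * Rz - transpose_mat Rz * RuiT * Luz
    + transpose_mat Rz * RuiT * Luu * minv Ru * Rz"

definition K :: "'a mat" where
  "K = block3 Luu Luz (transpose_mat Ru) Lzu Lzz (transpose_mat Rz) Ru Rz (0\<^sub>m m m)"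

definition P2 :: "'a mat" where
  "P2 = block3 (0\<^sub>m m m) (0\<^sub>m m n) (transpose_mat Ru) (0\<^sub>m n m) B (transpose_mat Rz)
    Ru Rz (0\<^sub>m m m)"

definition K1 :: "'a mat" where
  "K1 = block3 (Luu * minv Ru) (0\<^sub>m m n) (1\<^sub>m m)
    (Lzu * minv Ru) (1\<^sub>m n) (transpose_mat Rz * RuiT) (1\<^sub>m m) (0\<^sub>m m n) (0\<^sub>m m m)"

definition K2 :: "'a mat" where
  "K2 = block3 Ru Rz (0\<^sub>m m m) (0\<^sub>m n m) B (0\<^sub>m n m)
    (0\<^sub>m m m) (Luz - Luu * minv Ru * Rz) (transpose_mat Ru)"

definition P4 :: "'a mat" where "P4 = K1 * K2"

(* Z = [-W; I] spans the kernel of [Ru Rz], and H = Z^T [Luu Luz; Lzu Lzz] Z. *)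
definition W :: "'a mat" where "W = minv Ru * Rz"
definition X :: "'a mat" where "X = Luz - Luu * W"
definition G :: "'a mat" where "G = minv B * H"

lemma minv_Ru: "minv Ru \<in> carrier_mat m m" "Ru * minv Ru = 1\<^sub>m m" "minv Ru * Ru = 1\<^sub>m m"
  using minv_invertible[OF Ru] by auto

lemma minv_B: "minv B \<in> carrier_mat n n" "B * minv B = 1\<^sub>m n" "minv B * B = 1\<^sub>m n"
  using minv_invertible[OF B] by auto

lemma RuiT: "RuiT \<in> carrier_mat m m" "transpose_mat Ru * RuiT = 1\<^sub>m m"
  "RuiT * transpose_mat Ru = 1\<^sub>m m"
  unfolding RuiT_def using minv_Ru(1)
  by (simp_all flip: transpose_mult[OF minv_Ru(1) Ru(1)] transpose_mult[OF Ru(1) minv_Ru(1)]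
      add: minv_Ru)

lemma Lzu_carrier: "Lzu \<in> carrier_mat n m"
  unfolding Lzu_def using Luz by simp

lemmas dims [simp] = carrier_matD[OF Ru(1)] carrier_matD[OF Rz] carrier_matD[OF Luu]
  carrier_matD[OF Luz] carrier_matD[OF Lzz] carrier_matD[OF B(1)]
  carrier_matD[OF minv_Ru(1)] carrier_matD[OF minv_B(1)] carrier_matD[OF RuiT(1)]
  carrier_matD[OF Lzu_carrier]

lemma H_carrier: "H \<in> carrier_mat n n"
  and W_carrier: "W \<in> carrier_mat m n" and X_carrier: "X \<in> carrier_mat m n"
  and G_carrier: "G \<in> carrier_mat n n"
  unfolding H_def W_def X_def G_def by (intro carrier_matI; simp)+

lemmas dims' [simp] = carrier_matD[OF H_carrier] carrier_matD[OF W_carrier]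
  carrier_matD[OF X_carrier] carrier_matD[OF G_carrier]

lemmas carriers [simp] = Ru(1) Rz Luu Luz Lzz B(1) minv_Ru(1) minv_B(1) RuiT(1) Lzu_carrier
  H_carrier W_carrier X_carrier G_carrier

lemma transpose_W: "transpose_mat W = transpose_mat Rz * RuiT"
  unfolding W_def RuiT_def by (rule transpose_mult[OF minv_Ru(1) Rz])

lemma RuT_carrier: "transpose_mat Ru \<in> carrier_mat m m"
  by simp

lemmas inverse_cancel [simp] = minv_Ru(2,3) minv_B(2,3) RuiT(2,3)
  mult_inverse_cancel_dim[OF minv_Ru(2) Ru(1) minv_Ru(1)]
  mult_inverse_cancel_dim[OF minv_Ru(3) minv_Ru(1) Ru(1)]
  mult_inverse_cancel_dim[OF minv_B(2) B(1) minv_B(1)]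
  mult_inverse_cancel_dim[OF minv_B(3) minv_B(1) B(1)]
  mult_inverse_cancel_dim[OF RuiT(2) RuT_carrier RuiT(1)]
  mult_inverse_cancel_dim[OF RuiT(3) RuiT(1) RuT_carrier]

lemma Ru_W: "Ru * W = Rz"
  unfolding W_def by simp

lemmas mult_block3_mnm = mult_block3[of _ m m _ n _ m _ n _ _ _ m _ _ _ m _ n _ m]

lemma H_eq: "H = Lzz - Lzu * W - transpose_mat W * X"
proof -
  have "transpose_mat W * X = transpose_mat Rz * RuiT * Luz - transpose_mat Rz * RuiT * (Luu * W)"
    unfolding transpose_W X_def
    by (rule mult_minus_distrib_mat[of _ n m]) (intro carrier_matI; simp)+
  then show ?thesis unfolding H_def W_def
    by (auto simp: mult_assoc_dim intro!: eq_matI)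
qed

lemma minv_P2_K_similar:
  "similar_mat (minv P2 * K) (block3 (1\<^sub>m m) (0\<^sub>m m n) (0\<^sub>m m m)
      (minv B * (Lzu - transpose_mat W * Luu)) G (0\<^sub>m n m) (RuiT * Luu) (RuiT * X) (1\<^sub>m m))"
    (is "similar_mat _ ?T")
proof -
  define S where "S = block3 (1\<^sub>m m) (- W) (0\<^sub>m m m) (0\<^sub>m n m) (1\<^sub>m n) (0\<^sub>m n m)
    (0\<^sub>m m m) (0\<^sub>m m n) (1\<^sub>m m)"
  define S' where "S' = block3 (1\<^sub>m m) W (0\<^sub>m m m) (0\<^sub>m n m) (1\<^sub>m n) (0\<^sub>m n m)
    (0\<^sub>m m m) (0\<^sub>m m n) (1\<^sub>m m)"
  define F where "F = block3 (0\<^sub>m m m) (0\<^sub>m m n) (transpose_mat Ru) (0\<^sub>m n m) B (transpose_mat Rz)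
    Ru (0\<^sub>m m n) (0\<^sub>m m m)"
  define F' where "F' = block3 (0\<^sub>m m m) (0\<^sub>m m n) (minv Ru) (- (minv B * transpose_mat W)) (minv B)
    (0\<^sub>m n m) RuiT (0\<^sub>m m n) (0\<^sub>m m m)"
  have "K * S = block3 Luu X (transpose_mat Ru) Lzu (Lzz - Lzu * W) (transpose_mat Rz) Ru
      (0\<^sub>m m n) (0\<^sub>m m m)"
    unfolding K_def S_def
    by (subst mult_block3_mnm) (simp_all add: X_def Ru_W, intro block3_cong, auto)
  also have "\<dots> = F * ?T"
    unfolding F_def
    apply (subst mult_block3_mnm; (intro carrier_matI; simp)?)
    by (simp add: transpose_W G_def H_eq mult_assoc_dim, intro block3_cong, auto)
  also have F: "F = P2 * S"
    unfolding P2_def S_def F_def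
    by (subst mult_block3_mnm) (simp_all add: Ru_W, intro block3_cong, auto)
  finally have KS: "K * S = P2 * S * ?T" .
  have FF': "F * F' = 1\<^sub>m (m + n + m)"
    unfolding F_def F'_def block3_one_mat[symmetric]
    by (subst mult_block3_mnm; (intro carrier_matI; simp)?)
      (simp add: transpose_W mult_assoc_dim, intro block3_cong, auto)
  have SS': "S * S' = 1\<^sub>m (m + n + m)"
    unfolding S_def S'_def block3_one_mat[symmetric]
    by (subst mult_block3_mnm) (simp_all, intro block3_cong, auto)
  have carrier: "P2 \<in> carrier_mat (m + n + m) (m + n + m)" "K \<in> carrier_mat (m + n + m) (m + n + m)"
    "S \<in> carrier_mat (m + n + m) (m + n + m)" "S' \<in> carrier_mat (m + n + m) (m + n + m)"
    "F' \<in> carrier_mat (m + n + m) (m + n + m)" "?T \<in> carrier_mat (m + n + m) (m + n + m)"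
    unfolding P2_def K_def S_def S'_def F'_def by (auto intro: block3_carrier_mat)
  have "P2 * (S * F') = 1\<^sub>m (m + n + m)"
    using FF' F carrier by simp
  with carrier SS' KS show ?thesis
    by (intro similar_mat_minv_mult[where Q = "S * F'" and S = S and S' = S']) auto
qed

lemma minv_P4_K:
  "minv P4 * K = block3 (1\<^sub>m m) (minv Ru * (Rz - Rz * G)) (0\<^sub>m m m) (0\<^sub>m n m) G (0\<^sub>m n m)
      (0\<^sub>m m m) (RuiT * (X - X * G)) (1\<^sub>m m)"
    (is "_ = ?T")
proof -
  define L where "L = block3 Ru Rz (0\<^sub>m m m) (0\<^sub>m n m) H (0\<^sub>m n m) (0\<^sub>m m m) X (transpose_mat Ru)"
  define K1' where "K1' = block3 (0\<^sub>m m m) (0\<^sub>m m n) (1\<^sub>m m)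
    (- transpose_mat W) (1\<^sub>m n) (transpose_mat W * (Luu * minv Ru) - Lzu * minv Ru)
    (1\<^sub>m m) (0\<^sub>m m n) (- (Luu * minv Ru))"
  define K2' where "K2' = block3 (minv Ru) (- (minv Ru * (Rz * minv B))) (0\<^sub>m m m)
    (0\<^sub>m n m) (minv B) (0\<^sub>m n m) (0\<^sub>m m m) (- (RuiT * (X * minv B))) RuiT"
  have K1L: "K1 * L = K"
    unfolding K1_def L_def K_def
    by (subst mult_block3_mnm; (intro carrier_matI; simp)?)
      (simp add: H_eq X_def W_def transpose_W[unfolded W_def] mult_assoc_dim, intro block3_cong, auto)
  have K2T: "K2 * ?T = L"
    unfolding K2_def L_def
    by (subst mult_block3_mnm; (intro carrier_matI; simp)?)
      (simp add: G_def X_def W_def mult_assoc_dim, intro block3_cong, auto)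
  have K1K1': "K1 * K1' = 1\<^sub>m (m + n + m)"
    unfolding K1_def K1'_def block3_one_mat[symmetric]
    by (subst mult_block3_mnm; (intro carrier_matI; simp)?)
      (simp add: transpose_W mult_assoc_dim, intro block3_cong, auto)
  have K2K2': "K2 * K2' = 1\<^sub>m (m + n + m)"
    unfolding K2_def K2'_def block3_one_mat[symmetric]
    by (subst mult_block3_mnm; (intro carrier_matI; simp)?)
      (simp add: X_def W_def mult_assoc_dim, intro block3_cong, auto)
  have carrier: "K1 \<in> carrier_mat (m + n + m) (m + n + m)" "K2 \<in> carrier_mat (m + n + m) (m + n + m)"
    "K1' \<in> carrier_mat (m + n + m) (m + n + m)" "K2' \<in> carrier_mat (m + n + m) (m + n + m)"
    "?T \<in> carrier_mat (m + n + m) (m + n + m)"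
    unfolding K1_def K2_def K1'_def K2'_def by (intro block3_carrier_mat carrier_matI; simp)+
  have P4: "P4 \<in> carrier_mat (m + n + m) (m + n + m)"
    unfolding P4_def using carrier by simp
  have "K2 * (K2' * K1') = K1'"
    using carrier K2K2' by (simp flip: assoc_mult_mat[OF carrier(2,4,3)])
  then have inv: "P4 * (K2' * K1') = 1\<^sub>m (m + n + m)"
    unfolding P4_def using carrier K1K1'
    by (simp add: assoc_mult_mat[OF carrier(1,2) mult_carrier_mat[OF carrier(4,3)]])
  have "K = P4 * ?T"
    unfolding P4_def K1L[symmetric] K2T[symmetric] by (simp add: assoc_mult_mat[OF carrier(1,2,5)])
  then show ?thesis
    using minv_mult_cancel_left[OF P4 _ inv carrier(5)] carrier(3,4) by simp
qed

lemma minv_P2_K_carrier: "minv P2 * K \<in> carrier_mat (m + n + m) (m + n + m)"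
proof -
  let ?T = "block3 (1\<^sub>m m) (0\<^sub>m m n) (0\<^sub>m m m)
      (minv B * (Lzu - transpose_mat W * Luu)) G (0\<^sub>m n m) (RuiT * Luu) (RuiT * X) (1\<^sub>m m)"
  obtain k where k: "{minv P2 * K, ?T} \<subseteq> carrier_mat k k"
    using similar_matD[OF minv_P2_K_similar] by blast
  have "?T \<in> carrier_mat (m + n + m) (m + n + m)"
    by (intro block3_carrier_mat carrier_matI; simp)+
  with k have "k = m + n + m"
    by (metis carrier_matD(1) insert_subset)
  with k show ?thesis by simp
qed

lemma minv_P4_K_carrier: "minv P4 * K \<in> carrier_mat (m + n + m) (m + n + m)"
  unfolding minv_P4_K by (intro block3_carrier_mat carrier_matI; simp)+

lemma char_poly_minv_P2_K: "char_poly (minv P2 * K) = [:-1, 1:] ^ (2 * m) * char_poly G"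
  unfolding char_poly_similar[OF minv_P2_K_similar]
  by (subst char_poly_block3_upper_right_zero[of _ m _ n]; (intro carrier_matI; simp)?)
    (subst char_poly_four_block_mat_upper_right_zero[of _ m _ n];
      (intro carrier_matI; simp | simp add: char_poly_one_mat mult_2 power_add))

lemma char_poly_minv_P4_K: "char_poly (minv P4 * K) = [:-1, 1:] ^ (2 * m) * char_poly G"
  unfolding minv_P4_K
  by (subst char_poly_block3_upper_right_zero[of _ m _ n]; (intro carrier_matI; simp)?)
    (subst char_poly_four_block_mat_lower_left_zero[of _ m _ n];
      (intro carrier_matI; simp | simp add: char_poly_one_mat mult_2 power_add))

end

interpretation of_real_poly_hom: map_poly_idom_hom "of_real :: real \<Rightarrow> complex" ..

theorem mainTheorem7:
  fixes m n :: nat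
    and Ru Rz Luu Luz Lzz B :: "real mat"
  assumes "m \<ge> 1" and "n \<ge> 1"
    and Ru: "Ru \<in> carrier_mat m m" "invertible_mat Ru"
    and Rz: "Rz \<in> carrier_mat m n"
    and Luu: "Luu \<in> carrier_mat m m" "transpose_mat Luu = Luu"
    and Luz: "Luz \<in> carrier_mat m n"
    and Lzz: "Lzz \<in> carrier_mat n n" "transpose_mat Lzz = Lzz"
    and B: "B \<in> carrier_mat n n" "invertible_mat B"
  defines "Lzu \<equiv> transpose_mat Luz"
    and "RuiT \<equiv> transpose_mat (minv Ru)"
  defines "H \<equiv> Lzz - Lzu * minv Ru * Rz - transpose_mat Rz * RuiT * Luz
                + transpose_mat Rz * RuiT * Luu * minv Ru * Rz"
    and "K \<equiv> block3 Luu Luz (transpose_mat Ru)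
                    Lzu Lzz (transpose_mat Rz)
                    Ru Rz (0\<^sub>m m m)"
    and "P2 \<equiv> block3 (0\<^sub>m m m) (0\<^sub>m m n) (transpose_mat Ru)
                     (0\<^sub>m n m) B (transpose_mat Rz)
                     Ru Rz (0\<^sub>m m m)"
    and "K1 \<equiv> block3 (Luu * minv Ru) (0\<^sub>m m n) (1\<^sub>m m)
                     (Lzu * minv Ru) (1\<^sub>m n) (transpose_mat Rz * RuiT)
                     (1\<^sub>m m) (0\<^sub>m m n) (0\<^sub>m m m)"
    and "K2 \<equiv> block3 Ru Rz (0\<^sub>m m m)
                     (0\<^sub>m n m) B (0\<^sub>m n m)
                     (0\<^sub>m m m) (Luz - Luu * minv Ru * Rz) (transpose_mat Ru)"
  defines "P4 \<equiv> K1 * K2"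
  shows "(\<forall>lam::complex.
            det (cmat (minv P2 * K) - lam \<cdot>\<^sub>m 1\<^sub>m (2*m+n))
            = (1 - lam) ^ (2*m) * det (cmat (minv B * H) - lam \<cdot>\<^sub>m 1\<^sub>m n))
       \<and> char_poly (cmat (minv P2 * K)) = char_poly (cmat (minv P4 * K))
       \<and> char_poly (cmat (minv P2 * K)) = [:-1, 1:] ^ (2*m) * char_poly (cmat (minv B * H))"
proof -
  interpret S: kkt_system m n Ru Rz Luu Luz Lzz B
    using Ru Rz Luu Luz Lzz B by unfold_locales
  have defs: "K = S.K" "P2 = S.P2" "P4 = S.P4" "minv B * H = S.G"
    unfolding K_def P2_def P4_def K1_def K2_def H_def Lzu_def RuiT_def
      S.K_def S.P2_def S.P4_def S.K1_def S.K2_def S.G_def S.H_def S.Lzu_def S.RuiT_def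
    by simp_all
  have dim: "2 * m + n = m + n + m"
    by simp
  have carrier: "minv S.P2 * S.K \<in> carrier_mat (2 * m + n) (2 * m + n)"
    "minv S.P4 * S.K \<in> carrier_mat (2 * m + n) (2 * m + n)" "S.G \<in> carrier_mat n n"
    unfolding dim by (fact S.minv_P2_K_carrier S.minv_P4_K_carrier S.G_carrier)+
  have "char_poly (cmat (minv P2 * K)) = [:-1, 1:] ^ (2*m) * char_poly (cmat (minv B * H))"
    unfolding defs of_real_hom.char_poly_hom[OF carrier(1)] of_real_hom.char_poly_hom[OF carrier(3)]
      S.char_poly_minv_P2_K by (simp add: hom_distribs)
  moreover have "char_poly (cmat (minv P4 * K)) = [:-1, 1:] ^ (2*m) * char_poly (cmat (minv B * H))"
    unfolding defs of_real_hom.char_poly_hom[OF carrier(2)] of_real_hom.char_poly_hom[OF carrier(3)]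
      S.char_poly_minv_P4_K by (simp add: hom_distribs)
  ultimately show ?thesis
    using det_minus_scalar_one_factor[of "cmat (minv P2 * K)" "2 * m" n "cmat (minv B * H)"]
      carrier unfolding defs by simp
qed

end
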